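(* Let $\mathcal{R}$ be a fusion ring with basis $\{x_1=1,\ldots,x_m\}$ and fusion matrices $M_j$, and for $n\ge1$ let $T_n=\sum_{i=1}^m\|M_i\|^2\big(M_i/\|M_i\|\big)^{\otimes n}$. If $n\ge2$ and $T_n\geq0$, then $T_{n-1}\geq 0$.
   Context: A fusion ring is a ring $\mathcal{R}$ which is a free $\mathbb{Z}$-module with a finite basis $\{x_1=1,\ldots,x_m\}$ such that $x_ix_j=\sum_k N_{ij}^k x_k$ with $N_{ij}^k\in\mathbb{N}$; there is an involution $i\mapsto i^*$ whose $\mathbb{Z}$-linear extension is an anti-involution of $\mathcal{R}$; and the coefficient of $x_1$ in $x_ix_j$ equals $\delta_{i,j^*}$. The fusion matrix is $(M_j)_{k,i}=N_{ji}^k$, $\|M_j\|$ its operator norm on $\mathbb{C}^m$, $\otimes n$ the Kronecker power, and $A\ge0$ means positive semidefinite. *)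

theory Defs
  imports "HOL-Analysis.Analysis"
begin

text \<open>The distinguished element e is the basis element x_1 = 1, N i j k is the
  structure constant N_{ij}^k (coefficient of x_k in x_i x_j), and dual is the
  involution i \<mapsto> i^*.\<close>

definition fusion_ring :: "('b::finite \<Rightarrow> 'b \<Rightarrow> 'b \<Rightarrow> nat) \<Rightarrow> 'b \<Rightarrow> ('b \<Rightarrow> 'b) \<Rightarrow> bool" where
  "fusion_ring N e dual \<longleftrightarrow>
     (\<forall>i j l s. (\<Sum>k\<in>UNIV. N i j k * N k l s) = (\<Sum>k\<in>UNIV. N j l k * N i k s)) \<and>
     (\<forall>j k. N e j k = (if j = k then 1 else 0)) \<and>
     (\<forall>j k. N j e k = (if j = k then 1 else 0)) \<and>
     (\<forall>i. dual (dual i) = i) \<and>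
     (\<forall>i j k. N (dual j) (dual i) (dual k) = N i j k) \<and>
     (\<forall>i j. N i j e = (if i = dual j then 1 else 0))"

definition fusion_matrix :: "('b::finite \<Rightarrow> 'b \<Rightarrow> 'b \<Rightarrow> nat) \<Rightarrow> 'b \<Rightarrow> complex^'b^'b" where
  "fusion_matrix N j = (\<chi> k i. of_nat (N j i k))"

definition mat_opnorm :: "complex^'b^'b \<Rightarrow> real" where
  "mat_opnorm A = onorm (\<lambda>v. A *v v)"

text \<open>Kronecker power A^{\<otimes>n}, with rows/columns indexed by multi-indices
  (lists of length n over the basis).\<close>
definition kron_pow :: "complex^'b^'b \<Rightarrow> nat \<Rightarrow> 'b list \<Rightarrow> 'b list \<Rightarrow> complex" where
  "kron_pow A n u v = (\<Prod>t<n. A $ (u ! t) $ (v ! t))"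

definition T_mat :: "('b::finite \<Rightarrow> 'b \<Rightarrow> 'b \<Rightarrow> nat) \<Rightarrow> nat \<Rightarrow> 'b list \<Rightarrow> 'b list \<Rightarrow> complex" where
  "T_mat N n u v = (\<Sum>i\<in>UNIV.
      complex_of_real ((mat_opnorm (fusion_matrix N i))\<^sup>2) *
      kron_pow (\<chi> a b. fusion_matrix N i $ a $ b / complex_of_real (mat_opnorm (fusion_matrix N i))) n u v)"

definition psd_on :: "'i set \<Rightarrow> ('i \<Rightarrow> 'i \<Rightarrow> complex) \<Rightarrow> bool" where
  "psd_on I A \<longleftrightarrow> (\<forall>u\<in>I. \<forall>v\<in>I. A v u = cnj (A u v)) \<and>
     (\<forall>x. Im (\<Sum>u\<in>I. \<Sum>v\<in>I. cnj (x u) * A u v * x v) = 0 \<and>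
          Re (\<Sum>u\<in>I. \<Sum>v\<in>I. cnj (x u) * A u v * x v) \<ge> 0)"

end

theory Submission
  imports Defs
begin

(* Let d be the Perron-Frobenius vector of the fusion ring: a positive unit vector with
   M_j d = lambda_j d for every j.  It exists because every M_j commutes with the matrix of
   right multiplication by the sum of all basis elements, whose entries are all positive;
   such a matrix has a positive eigenvector (Brouwer's fixed point theorem on the simplex),
   which spans its eigenspace, so that eigenspace is preserved by every M_j.  Since the
   transpose of M_j is M_{j*}, Schur's test with the weight d gives ||M_j|| = lambda_j, hence
   d^T (M_j / ||M_j||) d = 1.  Contracting the first tensor factor of T_n against d therefore
   yields T_(n-1), so the quadratic form of T_(n-1) at x is that of T_n at d tensor x. *)

definition prob_simplex :: "(real^'n) set" where
  "prob_simplex = {v. (\<forall>i. 0 \<le> v$i) \<and> (\<Sum>i\<in>UNIV. v$i) = 1}"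

lemma compact_prob_simplex: "compact prob_simplex"
  unfolding compact_eq_bounded_closed
proof
  show "bounded prob_simplex"
  proof (unfold bounded_iff, intro exI ballI)
    fix v :: "real^'n" assume "v \<in> prob_simplex"
    then show "norm v \<le> 1" using norm_le_l1_cart[of v] unfolding prob_simplex_def by simp
  qed
next
  show "closed prob_simplex" unfolding prob_simplex_def
    by (intro closed_Collect_conj closed_Collect_all closed_Collect_le closed_Collect_eq continuous_intros)
qed

lemma convex_prob_simplex: "convex prob_simplex"
  unfolding prob_simplex_def convex_def by (simp add: sum.distrib flip: sum_distrib_left)

lemma prob_simplex_nonempty: "prob_simplex \<noteq> {}"
proof -
  have "axis undefined 1 \<in> prob_simplex" unfolding prob_simplex_def axis_def by simp
  then show ?thesis by blast
qed

lemma positive_matrix_mult_prob_simplex_pos: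
  fixes A :: "real^'n^'n"
  assumes A_pos: "\<And>i j. A$i$j > 0" and "v \<in> prob_simplex"
  shows "(A *v v)$k > 0"
proof -
  from \<open>v \<in> prob_simplex\<close> have v_nonneg: "\<And>i. v$i \<ge> 0" and "(\<Sum>i\<in>UNIV. v$i) = 1"
    unfolding prob_simplex_def by auto
  then obtain i where "v$i \<noteq> 0" by force
  with v_nonneg have "A$k$i * v$i > 0" using A_pos[of k i] by (simp add: order_neq_le_trans)
  moreover have "\<forall>j\<in>UNIV. 0 \<le> A$k$j * v$j" using v_nonneg A_pos by (simp add: less_imp_le)
  ultimately show ?thesis unfolding matrix_vector_mult_def by (simp add: sum_pos2)
qed

text \<open>The positive eigenvector is a fixed point of \<open>v \<mapsto> A v / \<parallel>A v\<parallel>\<^sub>1\<close> on the simplex.\<close>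
lemma positive_matrix_has_positive_eigenvector:
  fixes A :: "real^'n^'n"
  assumes A_pos: "\<And>i j. A$i$j > 0"
  shows "\<exists>d r. (\<forall>k. d$k > 0) \<and> A *v d = r *\<^sub>R d"
proof -
  define f where "f v = inverse (\<Sum>k\<in>UNIV. (A *v v)$k) *\<^sub>R (A *v v)" for v
  note Av_pos = positive_matrix_mult_prob_simplex_pos[OF A_pos]
  have Av_sum_pos: "(\<Sum>k\<in>UNIV. (A *v v)$k) > 0" if "v \<in> prob_simplex" for v
    using Av_pos[OF that] by (simp add: sum_pos)
  have "continuous_on prob_simplex f"
    unfolding f_def using Av_sum_pos by (intro continuous_intros) force
  moreover have "f \<in> prob_simplex \<rightarrow> prob_simplex"
  proof
    fix v :: "real^'n" assume "v \<in> prob_simplex"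
    note Av = Av_pos[OF this] and s = Av_sum_pos[OF this]
    have "0 \<le> f v $ i" for i
      unfolding f_def using Av[of i] s by simp
    moreover have "(\<Sum>i\<in>UNIV. f v $ i) = 1"
      unfolding f_def using s by (simp flip: sum_distrib_left)
    ultimately show "f v \<in> prob_simplex" unfolding prob_simplex_def by blast
  qed
  ultimately obtain d where d: "d \<in> prob_simplex" "f d = d"
    using brouwer[OF compact_prob_simplex convex_prob_simplex prob_simplex_nonempty] by blast
  define r where "r = (\<Sum>k\<in>UNIV. (A *v d)$k)"
  have "r > 0" unfolding r_def using Av_sum_pos[OF d(1)] .
  have d_eq: "d = inverse r *\<^sub>R (A *v d)" using d(2) unfolding f_def r_def by simp
  have "A *v d = r *\<^sub>R (inverse r *\<^sub>R (A *v d))" using \<open>r > 0\<close> by simp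
  then have "A *v d = r *\<^sub>R d" by (simp flip: d_eq)
  moreover have "d$k > 0" for k
  proof -
    have "d$k = inverse r * (A *v d)$k" using arg_cong[where f="\<lambda>v. v$k", OF d_eq] by simp
    then show ?thesis using \<open>r > 0\<close> Av_pos[OF d(1), of k] by simp
  qed
  ultimately show ?thesis by blast
qed

lemma positive_matrix_eigenvector_unique:
  fixes A :: "real^'n^'n"
  assumes A_pos: "\<And>i j. A$i$j > 0" and d_pos: "\<And>k. d$k > 0"
    and Ad: "A *v d = r *\<^sub>R d" and Av: "A *v v = r *\<^sub>R v"
  shows "\<exists>t. v = t *\<^sub>R d"
proof -
  define t where "t = Min (range (\<lambda>k. v$k / d$k))"
  have "t \<in> range (\<lambda>k. v$k / d$k)" unfolding t_def by (intro Min_in) auto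
  then obtain k0 where k0: "t = v$k0 / d$k0" by blast
  define z where "z = v - t *\<^sub>R d"
  have z_nonneg: "z$k \<ge> 0" for k
  proof -
    have "t \<le> v$k / d$k" unfolding t_def by (intro Min_le) auto
    then show ?thesis using d_pos[of k] unfolding z_def by (simp add: le_divide_eq)
  qed
  have "(A *v z)$k0 = 0"
  proof -
    have "A *v z = r *\<^sub>R z" unfolding z_def
      by (simp add: matrix_vector_mult_diff_distrib matrix_vector_mult_scaleR Ad Av algebra_simps)
    moreover have "z$k0 = 0" unfolding z_def using k0 d_pos[of k0] by simp
    ultimately show ?thesis by simp
  qed
  then have "\<forall>i\<in>UNIV. A$k0$i * z$i = 0"
    using z_nonneg A_pos by (simp add: matrix_vector_mult_def sum_nonneg_eq_0_iff less_imp_le)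
  then have "z = 0" using A_pos[of k0] by (simp add: vec_eq_iff less_imp_neq[symmetric])
  then show ?thesis unfolding z_def by auto
qed

lemma commuting_family_common_positive_eigenvector:
  fixes A :: "real^'n^'n" and L :: "'j \<Rightarrow> real^'n^'n"
  assumes A_pos: "\<And>i j. A$i$j > 0" and commute: "\<And>j. L j ** A = A ** L j"
  shows "\<exists>d lam. (\<forall>k. d$k > 0) \<and> norm d = 1 \<and> (\<forall>j. L j *v d = lam j *\<^sub>R d)"
proof -
  obtain d0 r where d0_pos: "\<And>k. d0$k > 0" and Ad0: "A *v d0 = r *\<^sub>R d0"
    using positive_matrix_has_positive_eigenvector[OF A_pos] by blast
  have "d0 \<noteq> 0" using d0_pos by (metis less_irrefl zero_index)
  define d where "d = inverse (norm d0) *\<^sub>R d0"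
  have d_pos: "d$k > 0" for k using d0_pos[of k] \<open>d0 \<noteq> 0\<close> unfolding d_def by simp
  have "norm d = 1" unfolding d_def using \<open>d0 \<noteq> 0\<close> by simp
  have Ad: "A *v d = r *\<^sub>R d" unfolding d_def by (simp add: matrix_vector_mult_scaleR Ad0)
  have "\<exists>t. L j *v d = t *\<^sub>R d" for j
  proof (rule positive_matrix_eigenvector_unique[OF A_pos d_pos Ad])
    have "A *v (L j *v d) = L j *v (A *v d)"
      by (simp add: matrix_vector_mul_assoc commute)
    then show "A *v (L j *v d) = r *\<^sub>R (L j *v d)" by (simp add: Ad matrix_vector_mult_scaleR)
  qed
  then obtain lam where "\<And>j. L j *v d = lam j *\<^sub>R d" by metis
  with d_pos \<open>norm d = 1\<close> show ?thesis by blast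
qed

lemma weighted_Cauchy_Schwarz:
  fixes a d y :: "'i \<Rightarrow> real"
  assumes a_nonneg: "\<And>i. i \<in> I \<Longrightarrow> a i \<ge> 0" and d_pos: "\<And>i. i \<in> I \<Longrightarrow> d i > 0"
  shows "(\<Sum>i\<in>I. a i * y i)\<^sup>2 \<le> (\<Sum>i\<in>I. a i * d i) * (\<Sum>i\<in>I. a i * (y i)\<^sup>2 / d i)"
proof -
  have "(\<Sum>i\<in>I. a i * y i) = (\<Sum>i\<in>I. sqrt (a i * d i) * (sqrt (a i / d i) * y i))"
  proof (rule sum.cong)
    fix i assume "i \<in> I"
    then have "sqrt (a i * d i) * sqrt (a i / d i) = a i"
      using a_nonneg[OF \<open>i \<in> I\<close>] d_pos[OF \<open>i \<in> I\<close>]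
      by (simp add: real_sqrt_mult[symmetric])
    then show "a i * y i = sqrt (a i * d i) * (sqrt (a i / d i) * y i)" by (simp add: mult.assoc)
  qed simp
  also have "(\<dots>)\<^sup>2 \<le> (\<Sum>i\<in>I. (sqrt (a i * d i))\<^sup>2) * (\<Sum>i\<in>I. (sqrt (a i / d i) * y i)\<^sup>2)"
    by (rule Cauchy_Schwarz_ineq_sum)
  also have "\<dots> = (\<Sum>i\<in>I. a i * d i) * (\<Sum>i\<in>I. a i * (y i)\<^sup>2 / d i)"
    using a_nonneg d_pos by (simp add: power_mult_distrib less_imp_le)
  finally show ?thesis .
qed

lemma nonneg_matrix_positive_eigenvector_eigenvalue_nonneg:
  fixes A :: "real^'n^'n"
  assumes "\<And>k i. A$k$i \<ge> 0" and "\<And>k. d$k > 0" and "A *v d = r *\<^sub>R d"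
  shows "r \<ge> 0"
proof -
  obtain k :: 'n where True by simp
  have "0 \<le> (A *v d)$k"
    using assms(1,2) by (simp add: matrix_vector_mult_def sum_nonneg less_imp_le)
  then show ?thesis using assms(2)[of k] assms(3) by (simp add: zero_le_mult_iff)
qed

lemma norm_matrix_vector_le_Schur_test:
  fixes A :: "real^'n^'n"
  assumes A_nonneg: "\<And>k i. A$k$i \<ge> 0" and d_pos: "\<And>k. d$k > 0"
    and Ad: "A *v d = r *\<^sub>R d" and ATd: "transpose A *v d = r *\<^sub>R d"
  shows "norm (A *v y) \<le> r * norm y"
proof -
  have row: "(\<Sum>i\<in>UNIV. A$k$i * d$i) = r * d$k" for k
    using arg_cong[where f="\<lambda>v. v$k", OF Ad] by (simp add: matrix_vector_mult_def)
  have col: "(\<Sum>k\<in>UNIV. A$k$i * d$k) = r * d$i" for i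
    using arg_cong[where f="\<lambda>v. v$i", OF ATd] by (simp add: matrix_vector_mult_def transpose_def mult.commute)
  have "r \<ge> 0" using nonneg_matrix_positive_eigenvector_eigenvalue_nonneg A_nonneg d_pos Ad .
  have "(norm (A *v y))\<^sup>2 = (\<Sum>k\<in>UNIV. (\<Sum>i\<in>UNIV. A$k$i * y$i)\<^sup>2)"
    unfolding power2_norm_eq_inner by (simp add: inner_vec_def matrix_vector_mult_def power2_eq_square)
  also have "\<dots> \<le> (\<Sum>k\<in>UNIV. r * d$k * (\<Sum>i\<in>UNIV. A$k$i * (y$i)\<^sup>2 / d$i))"
    by (intro sum_mono) (simp add: A_nonneg d_pos weighted_Cauchy_Schwarz flip: row)
  also have "\<dots> = r * (\<Sum>k\<in>UNIV. \<Sum>i\<in>UNIV. (y$i)\<^sup>2 / d$i * (A$k$i * d$k))"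
    by (simp add: sum_distrib_left mult_ac)
  also have "\<dots> = r * (\<Sum>i\<in>UNIV. (y$i)\<^sup>2 / d$i * (\<Sum>k\<in>UNIV. A$k$i * d$k))"
    by (subst sum.swap) (simp only: sum_distrib_left)
  also have "\<dots> = r * (\<Sum>i\<in>UNIV. (y$i)\<^sup>2 * r)"
    using d_pos by (simp add: col less_imp_neq[symmetric])
  also have "\<dots> = r\<^sup>2 * (\<Sum>i\<in>UNIV. (y$i)\<^sup>2)"
    by (simp add: sum_distrib_left power2_eq_square mult_ac)
  also have "\<dots> = (r * norm y)\<^sup>2"
    unfolding power_mult_distrib power2_norm_eq_inner inner_vec_def by (simp add: power2_eq_square)
  finally show ?thesis by (rule power2_le_imp_le) (simp add: \<open>r \<ge> 0\<close>)
qed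

lemma onorm_of_real_matrix_eq_eigenvalue:
  fixes A :: "real^'n^'n"
  assumes A_nonneg: "\<And>k i. A$k$i \<ge> 0" and d_pos: "\<And>k. d$k > 0"
    and Ad: "A *v d = r *\<^sub>R d" and ATd: "transpose A *v d = r *\<^sub>R d"
  shows "onorm (\<lambda>v. (\<chi> k i. complex_of_real (A$k$i)) *v v) = r"
proof (rule antisym)
  let ?M = "\<chi> k i. complex_of_real (A$k$i)"
  have M_apply: "(?M *v x)$k = (\<Sum>i\<in>UNIV. complex_of_real (A$k$i) * x$i)" for x k
    by (simp add: matrix_vector_mult_def)
  show "onorm (\<lambda>v. ?M *v v) \<le> r"
  proof (rule onorm_le)
    fix x :: "complex^'n"
    define y :: "real^'n" where "y = (\<chi> i. cmod (x$i))"
    have "norm (?M *v x) \<le> norm (A *v y)"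
    proof (rule norm_le_componentwise_cart)
      fix k
      have "norm ((?M *v x)$k) \<le> (\<Sum>i\<in>UNIV. norm (complex_of_real (A$k$i) * x$i))"
        unfolding M_apply by (rule norm_sum)
      also have "\<dots> = (\<Sum>i\<in>UNIV. A$k$i * cmod (x$i))"
        using A_nonneg by (simp add: norm_mult)
      also have "\<dots> \<le> norm ((A *v y)$k)" by (simp add: y_def matrix_vector_mult_def)
      finally show "norm ((?M *v x)$k) \<le> norm ((A *v y)$k)" .
    qed
    also have "\<dots> \<le> r * norm y"
      by (rule norm_matrix_vector_le_Schur_test[OF A_nonneg d_pos Ad ATd])
    finally show "norm (?M *v x) \<le> r * norm x" by (simp add: y_def norm_vec_def)
  qed
  define dc where "dc = (\<chi> k. complex_of_real (d$k))"
  have "dc \<noteq> 0" using d_pos by (metis dc_def less_irrefl of_real_eq_0_iff vec_lambda_beta zero_index)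
  have "(?M *v dc)$k = (r *\<^sub>R dc)$k" for k
  proof -
    have "(?M *v dc)$k = complex_of_real ((A *v d)$k)"
      by (simp add: dc_def matrix_vector_mult_def)
    also have "\<dots> = r *\<^sub>R dc$k" by (simp add: Ad dc_def) (simp add: scaleR_conv_of_real)
    finally show ?thesis by simp
  qed
  then have "?M *v dc = r *\<^sub>R dc" by (simp add: vec_eq_iff)
  then have "norm (?M *v dc) = r * norm dc"
    using nonneg_matrix_positive_eigenvector_eigenvalue_nonneg[OF A_nonneg d_pos Ad] by simp
  then show "r \<le> onorm (\<lambda>v. ?M *v v)"
    using le_onorm[of "\<lambda>v. ?M *v v" dc] \<open>dc \<noteq> 0\<close> by (simp add: pos_le_divide_eq)
qed

lemma transpose_eigenvalue_eq:
  fixes A :: "real^'n^'n"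
  assumes "d \<noteq> 0" and Ad: "A *v d = a *\<^sub>R d" and ATd: "transpose A *v d = b *\<^sub>R d"
  shows "a = b"
proof -
  have "a * (d \<bullet> d) = d \<bullet> (A *v d)" by (simp add: Ad)
  also have "\<dots> = (transpose A *v d) \<bullet> d" by (simp add: dot_lmul_matrix)
  also have "\<dots> = b * (d \<bullet> d)" by (simp only: ATd inner_scaleR_left)
  finally show ?thesis using \<open>d \<noteq> 0\<close> by simp
qed

lemma kron_pow_Cons: "kron_pow K (Suc m) (a # u) (b # v) = K$a$b * kron_pow K m u v"
  unfolding kron_pow_def prod.lessThan_Suc_shift by simp

lemma sum_lists_length_Suc:
  "(\<Sum>w\<in>{w. length w = Suc m}. h w) = (\<Sum>u\<in>{u. length u = m}. \<Sum>a\<in>UNIV. h (a # u))"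
proof -
  let ?L = "{u. length u = m}" and ?cons = "\<lambda>(u, a). a # u"
  have "inj_on ?cons (?L \<times> UNIV)" by (auto simp: inj_on_def)
  moreover have "{w. length w = Suc m} = ?cons ` (?L \<times> UNIV)"
    using lists_length_Suc_eq[of UNIV m] by simp
  ultimately have "(\<Sum>w\<in>{w. length w = Suc m}. h w) = (\<Sum>p\<in>?L \<times> UNIV. h (?cons p))"
    by (rule sum.reindex_cong) simp
  also have "\<dots> = (\<Sum>u\<in>?L. \<Sum>a\<in>UNIV. h (a # u))"
    by (simp add: sum.cartesian_product case_prod_unfold)
  finally show ?thesis .
qed

definition quad_form :: "'i set \<Rightarrow> ('i \<Rightarrow> 'i \<Rightarrow> complex) \<Rightarrow> ('i \<Rightarrow> complex) \<Rightarrow> complex" where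
  "quad_form I A x = (\<Sum>u\<in>I. \<Sum>v\<in>I. cnj (x u) * A u v * x v)"

lemma psd_on_iff_quad_form:
  "psd_on I A \<longleftrightarrow> (\<forall>u\<in>I. \<forall>v\<in>I. A v u = cnj (A u v)) \<and>
     (\<forall>x. Im (quad_form I A x) = 0 \<and> Re (quad_form I A x) \<ge> 0)"
  unfolding psd_on_def quad_form_def ..

context
  fixes S T :: "'a list \<Rightarrow> 'a list \<Rightarrow> complex" and w :: "'a \<Rightarrow> complex" and m :: nat
  assumes T_eq: "\<And>u v. T u v = (\<Sum>a\<in>UNIV. \<Sum>b\<in>UNIV. cnj (w a) * S (a # u) (b # v) * w b)"
begin

lemma hermitian_lists_contract:
  assumes S_herm: "\<forall>u'\<in>{u. length u = Suc m}. \<forall>v'\<in>{u. length u = Suc m}. S v' u' = cnj (S u' v')"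
    and "length u = m" "length v = m"
  shows "T v u = cnj (T u v)"
proof -
  have S_swap: "S (a # v) (b # u) = cnj (S (b # u) (a # v))" for a b
    by (rule S_herm[rule_format]) (simp_all add: assms(2,3))
  have "cnj (T u v) = (\<Sum>b\<in>UNIV. \<Sum>a\<in>UNIV. w b * cnj (S (b # u) (a # v)) * cnj (w a))"
    by (simp add: T_eq)
  also have "\<dots> = (\<Sum>a\<in>UNIV. \<Sum>b\<in>UNIV. w b * cnj (S (b # u) (a # v)) * cnj (w a))"
    by (rule sum.swap)
  also have "\<dots> = T v u"
    by (simp add: T_eq S_swap mult_ac)
  finally show ?thesis ..
qed

lemma quad_form_lists_contract:
  "quad_form {u. length u = m} T x = quad_form {u. length u = Suc m} S (\<lambda>u'. w (hd u') * x (tl u'))"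
proof -
  let ?L = "{u::'a list. length u = m}"
  have "quad_form {u. length u = Suc m} S (\<lambda>u'. w (hd u') * x (tl u'))
      = (\<Sum>u\<in>?L. \<Sum>a\<in>UNIV. \<Sum>v\<in>?L. \<Sum>b\<in>UNIV. cnj (w a * x u) * S (a # u) (b # v) * (w b * x v))"
    by (simp add: quad_form_def sum_lists_length_Suc)
  also have "\<dots> = (\<Sum>u\<in>?L. \<Sum>v\<in>?L. \<Sum>a\<in>UNIV. \<Sum>b\<in>UNIV. cnj (w a * x u) * S (a # u) (b # v) * (w b * x v))"
    by (intro sum.cong refl sum.swap)
  also have "\<dots> = quad_form ?L T x"
    unfolding quad_form_def
    by (intro sum.cong refl) (simp add: T_eq sum_distrib_left sum_distrib_right mult_ac)
  finally show ?thesis ..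
qed

lemma psd_on_lists_contract:
  assumes "psd_on {u. length u = Suc m} S"
  shows "psd_on {u. length u = m} T"
proof -
  have S_herm: "\<forall>u'\<in>{u. length u = Suc m}. \<forall>v'\<in>{u. length u = Suc m}. S v' u' = cnj (S u' v')"
    using assms unfolding psd_on_iff_quad_form by (rule conjunct1)
  have S_quad: "\<forall>y. Im (quad_form {u. length u = Suc m} S y) = 0 \<and> Re (quad_form {u. length u = Suc m} S y) \<ge> 0"
    using assms unfolding psd_on_iff_quad_form by (rule conjunct2)
  show ?thesis
    unfolding psd_on_iff_quad_form quad_form_lists_contract
  proof (intro conjI ballI allI)
    fix u v :: "'a list" assume "u \<in> {u. length u = m}" "v \<in> {u. length u = m}"
    then show "T v u = cnj (T u v)" by (intro hermitian_lists_contract[OF S_herm]) simp_all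
  qed (use S_quad in simp)+
qed

end

definition left_mult_matrix :: "('b::finite \<Rightarrow> 'b \<Rightarrow> 'b \<Rightarrow> nat) \<Rightarrow> 'b \<Rightarrow> real^'b^'b" where
  "left_mult_matrix N j = (\<chi> k i. real (N j i k))"

definition right_mult_basis_sum_matrix :: "('b::finite \<Rightarrow> 'b \<Rightarrow> 'b \<Rightarrow> nat) \<Rightarrow> real^'b^'b" where
  "right_mult_basis_sum_matrix N = (\<chi> k i. \<Sum>j\<in>UNIV. real (N i j k))"

lemma fusion_matrix_conv_left_mult_matrix:
  "fusion_matrix N j = (\<chi> k i. complex_of_real (left_mult_matrix N j $ k $ i))"
  by (simp add: fusion_matrix_def left_mult_matrix_def)

locale fusion_ring_basis =
  fixes N :: "'b::finite \<Rightarrow> 'b \<Rightarrow> 'b \<Rightarrow> nat" and e :: 'b and dual :: "'b \<Rightarrow> 'b"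
  assumes fusion_ring: "fusion_ring N e dual"
begin

lemma N_assoc: "(\<Sum>k\<in>UNIV. N i j k * N k l s) = (\<Sum>k\<in>UNIV. N j l k * N i k s)"
  using fusion_ring unfolding fusion_ring_def by blast

lemma N_unit_right: "N j e k = (if j = k then 1 else 0)"
  using fusion_ring unfolding fusion_ring_def by blast

lemma dual_dual [simp]: "dual (dual i) = i"
  using fusion_ring unfolding fusion_ring_def by blast

lemma N_dual: "N (dual j) (dual i) (dual k) = N i j k"
  using fusion_ring unfolding fusion_ring_def by blast

lemma N_unit_coeff: "N i j e = (if i = dual j then 1 else 0)"
  using fusion_ring unfolding fusion_ring_def by blast

lemma dual_eq_iff [simp]: "dual a = dual b \<longleftrightarrow> a = b"
  by (metis dual_dual)

text \<open>Compare the coefficients of \<open>x\<^sub>e\<close> in \<open>(x\<^bsub>c*\<^esub> x\<^sub>a) x\<^sub>b\<close> and \<open>x\<^bsub>c*\<^esub> (x\<^sub>a x\<^sub>b)\<close>.\<close>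
lemma N_Frobenius_reciprocity: "N a b c = N (dual c) a (dual b)"
proof -
  have "N (dual c) a (dual b) = (\<Sum>k\<in>UNIV. N (dual c) a k * N k b e)"
    by (simp add: N_unit_coeff if_distrib cong: if_cong)
  also have "\<dots> = (\<Sum>k\<in>UNIV. N a b k * N (dual c) k e)"
    by (rule N_assoc)
  also have "\<dots> = N a b c"
    by (simp add: N_unit_coeff if_distrib cong: if_cong)
  finally show ?thesis ..
qed

lemma N_dual_left: "N (dual j) i k = N j k i"
  by (metis N_dual N_Frobenius_reciprocity)

lemma ex_N_pos: "\<exists>j. N i j k > 0"
proof -
  have "0 < N k (dual k) e * N (dual i) e (dual i)"
    by (simp add: N_unit_coeff N_unit_right)
  also have "\<dots> \<le> (\<Sum>l\<in>UNIV. N k (dual k) l * N (dual i) l (dual i))"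
    by (rule member_le_sum) auto
  also have "\<dots> = (\<Sum>l\<in>UNIV. N (dual i) k l * N l (dual k) (dual i))"
    by (rule N_assoc[symmetric])
  finally have "(\<Sum>l\<in>UNIV. N (dual i) k l * N l (dual k) (dual i)) \<noteq> 0"
    by (rule gr_implies_not0)
  then obtain l where "0 < N l (dual k) (dual i)" by auto
  then have "N i l k > 0" using N_Frobenius_reciprocity[of l "dual k" "dual i"] by simp
  then show ?thesis ..
qed

lemma transpose_left_mult_matrix: "transpose (left_mult_matrix N j) = left_mult_matrix N (dual j)"
  by (simp add: vec_eq_iff transpose_def left_mult_matrix_def N_dual_left)

lemma right_mult_basis_sum_matrix_pos: "right_mult_basis_sum_matrix N $ k $ i > 0"
proof -
  obtain j where "N i j k > 0" using ex_N_pos by blast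
  then have "0 < real (N i j k)" by simp
  also have "\<dots> \<le> (\<Sum>j\<in>UNIV. real (N i j k))" by (rule member_le_sum) auto
  finally show ?thesis by (simp add: right_mult_basis_sum_matrix_def)
qed

lemma left_mult_matrix_commute:
  "left_mult_matrix N j ** right_mult_basis_sum_matrix N = right_mult_basis_sum_matrix N ** left_mult_matrix N j"
proof -
  have assoc_entry: "(\<Sum>l\<in>UNIV. N j l k * (\<Sum>s\<in>UNIV. N i s l)) = (\<Sum>l\<in>UNIV. (\<Sum>s\<in>UNIV. N l s k) * N j i l)"
    for i k
  proof -
    have "(\<Sum>l\<in>UNIV. N j l k * (\<Sum>s\<in>UNIV. N i s l)) = (\<Sum>l\<in>UNIV. \<Sum>s\<in>UNIV. N i s l * N j l k)"
      by (simp add: sum_distrib_left mult.commute)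
    also have "\<dots> = (\<Sum>s\<in>UNIV. \<Sum>l\<in>UNIV. N i s l * N j l k)"
      by (rule sum.swap)
    also have "\<dots> = (\<Sum>s\<in>UNIV. \<Sum>l\<in>UNIV. N j i l * N l s k)"
      by (simp add: N_assoc)
    also have "\<dots> = (\<Sum>l\<in>UNIV. \<Sum>s\<in>UNIV. N j i l * N l s k)"
      by (rule sum.swap)
    also have "\<dots> = (\<Sum>l\<in>UNIV. (\<Sum>s\<in>UNIV. N l s k) * N j i l)"
      by (simp only: sum_distrib_left sum_distrib_right mult.commute)
    finally show ?thesis .
  qed
  have "(\<Sum>l\<in>UNIV. real (N j l k) * (\<Sum>s\<in>UNIV. real (N i s l)))
      = (\<Sum>l\<in>UNIV. (\<Sum>s\<in>UNIV. real (N l s k)) * real (N j i l))" for i k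
    using arg_cong[where f = real, OF assoc_entry] by simp
  then show ?thesis
    by (simp add: vec_eq_iff matrix_matrix_mult_def left_mult_matrix_def right_mult_basis_sum_matrix_def)
qed

lemma ex_common_positive_eigenvector:
  "\<exists>d lam. (\<forall>k. d$k > 0) \<and> norm d = 1 \<and> (\<forall>j. left_mult_matrix N j *v d = lam j *\<^sub>R d)"
  using commuting_family_common_positive_eigenvector[OF right_mult_basis_sum_matrix_pos left_mult_matrix_commute] .

context
  fixes d :: "real^'b" and lam :: "'b \<Rightarrow> real"
  assumes d_pos: "\<And>k. d$k > 0" and eigen: "\<And>j. left_mult_matrix N j *v d = lam j *\<^sub>R d"
begin

lemma left_mult_matrix_eigenvector_component: "(\<Sum>i\<in>UNIV. real (N j i k) * d$i) = lam j * d$k"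
  using arg_cong[where f = "\<lambda>v. v$k", OF eigen[of j]] by (simp add: matrix_vector_mult_def left_mult_matrix_def)

lemma eigenvalue_pos: "lam j > 0"
proof -
  have "0 < d$e" by (rule d_pos)
  also have "\<dots> = real (N j e j) * d$e" by (simp add: N_unit_right)
  also have "\<dots> \<le> (\<Sum>i\<in>UNIV. real (N j i j) * d$i)"
    by (rule member_le_sum) (auto simp: d_pos less_imp_le)
  also have "\<dots> = lam j * d$j" by (rule left_mult_matrix_eigenvector_component)
  finally show ?thesis using d_pos[of j] by (simp add: zero_less_mult_iff)
qed

lemma eigenvalue_dual: "lam (dual j) = lam j"
proof (rule transpose_eigenvalue_eq)
  show "d \<noteq> 0" using d_pos by (metis less_irrefl zero_index)
  show "left_mult_matrix N (dual j) *v d = lam (dual j) *\<^sub>R d" by (rule eigen)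
  show "transpose (left_mult_matrix N (dual j)) *v d = lam j *\<^sub>R d"
    by (simp add: transpose_left_mult_matrix eigen)
qed

lemma mat_opnorm_fusion_matrix: "mat_opnorm (fusion_matrix N j) = lam j"
  unfolding mat_opnorm_def fusion_matrix_conv_left_mult_matrix
proof (rule onorm_of_real_matrix_eq_eigenvalue[OF _ d_pos eigen])
  show "transpose (left_mult_matrix N j) *v d = lam j *\<^sub>R d"
    by (simp add: transpose_left_mult_matrix eigen eigenvalue_dual)
qed (simp add: left_mult_matrix_def)

lemma T_mat_contract:
  assumes "norm d = 1"
  shows "T_mat N m u v = (\<Sum>a\<in>UNIV. \<Sum>b\<in>UNIV.
    cnj (complex_of_real (d$a)) * T_mat N (Suc m) (a # u) (b # v) * complex_of_real (d$b))"
proof -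
  define K where "K i = (\<chi> a b. fusion_matrix N i $ a $ b / complex_of_real (lam i))" for i
  have T: "T_mat N k u' v' = (\<Sum>i\<in>UNIV. complex_of_real ((lam i)\<^sup>2) * kron_pow (K i) k u' v')" for k u' v'
    unfolding T_mat_def K_def mat_opnorm_fusion_matrix ..
  have real_quad: "(\<Sum>a\<in>UNIV. \<Sum>b\<in>UNIV. d$a * (real (N i b a) / lam i) * d$b) = 1" for i
  proof -
    have "(\<Sum>a\<in>UNIV. \<Sum>b\<in>UNIV. d$a * (real (N i b a) / lam i) * d$b)
        = (\<Sum>a\<in>UNIV. d$a * (\<Sum>b\<in>UNIV. real (N i b a) * d$b) / lam i)"
      by (simp add: sum_distrib_left sum_divide_distrib mult_ac)
    also have "\<dots> = d \<bullet> d"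
      using eigenvalue_pos[of i] by (simp add: left_mult_matrix_eigenvector_component inner_vec_def)
    finally show ?thesis using assms by (simp add: dot_square_norm)
  qed
  have K_quad: "(\<Sum>a\<in>UNIV. \<Sum>b\<in>UNIV. complex_of_real (d$a) * K i $ a $ b * complex_of_real (d$b)) = 1" for i
    using arg_cong[where f = complex_of_real, OF real_quad[of i]] by (simp add: K_def fusion_matrix_def)
  have "(\<Sum>a\<in>UNIV. \<Sum>b\<in>UNIV. cnj (complex_of_real (d$a)) * T_mat N (Suc m) (a # u) (b # v) * complex_of_real (d$b))
      = (\<Sum>a\<in>UNIV. \<Sum>b\<in>UNIV. \<Sum>i\<in>UNIV. complex_of_real ((lam i)\<^sup>2) * kron_pow (K i) m u v
          * (complex_of_real (d$a) * K i $ a $ b * complex_of_real (d$b)))"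
    by (simp add: T kron_pow_Cons sum_distrib_left sum_distrib_right mult_ac)
  also have "\<dots> = (\<Sum>i\<in>UNIV. \<Sum>a\<in>UNIV. \<Sum>b\<in>UNIV. complex_of_real ((lam i)\<^sup>2) * kron_pow (K i) m u v
          * (complex_of_real (d$a) * K i $ a $ b * complex_of_real (d$b)))"
    by (subst sum.swap, rule sum.swap)
  also have "\<dots> = T_mat N m u v"
    by (simp add: T K_quad flip: sum_distrib_left)
  finally show ?thesis ..
qed

end

end

theorem mainTheorem17:
  fixes N :: "'b::finite \<Rightarrow> 'b \<Rightarrow> 'b \<Rightarrow> nat" and e :: 'b and dual :: "'b \<Rightarrow> 'b" and n :: nat
  assumes "fusion_ring N e dual"
    and "n \<ge> 2"
    and "psd_on {u::'b list. length u = n} (T_mat N n)"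
  shows "psd_on {u::'b list. length u = n - 1} (T_mat N (n - 1))"
proof -
  interpret fusion_ring_basis N e dual by unfold_locales (rule assms(1))
  obtain d lam where d_pos: "\<And>k. d$k > 0" and "norm d = 1"
    and eigen: "\<And>j. left_mult_matrix N j *v d = lam j *\<^sub>R d"
    using ex_common_positive_eigenvector by blast
  obtain m where n: "n = Suc m" using assms(2) by (cases n) auto
  have "psd_on {u. length u = m} (T_mat N m)"
    using T_mat_contract[OF d_pos eigen \<open>norm d = 1\<close>] assms(3)[unfolded n]
    by (rule psd_on_lists_contract)
  then show ?thesis by (simp add: n)
qed

end
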